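(* Let $\mathcal H$ be a complex Hilbert space (of any dimension) and let $A_1,\ldots,A_n,B$ be closed subspaces of $\mathcal H$ ($n\ge 0$). Then $A_1\mathbin{\&}\cdots\mathbin{\&}A_n\le B$ if and only if $[A_n]\cdots[A_1]\mathcal H\subseteq B$.
   Context: In the orthomodular lattice of closed subspaces of $\mathcal H$ (order $\subseteq$, $\neg A=A^\perp$, $\vee$ closed span, $\wedge$ intersection), $A\mathbin{\&}B=(A\vee B^\perp)\wedge B$; $\&$ associates to the left and the empty $\&$-product ($n=0$) is $\mathcal H$. $[A]$ denotes the orthogonal projection onto $A$; for $n=0$ the product $[A_n]\cdots[A_1]$ is the identity. *)

theory Defs
  imports "HOL-Analysis.Analysis"
begin

class complex_vector = real_vector +
  fixes scaleC :: "complex \<Rightarrow> 'a \<Rightarrow> 'a"  (infixr \<open>*\<^sub>C\<close> 75)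
  assumes scaleC_add_right: "a *\<^sub>C (x + y) = a *\<^sub>C x + a *\<^sub>C y"
    and scaleC_add_left: "(a + b) *\<^sub>C x = a *\<^sub>C x + b *\<^sub>C x"
    and scaleC_scaleC: "a *\<^sub>C (b *\<^sub>C x) = (a * b) *\<^sub>C x"
    and scaleC_one: "1 *\<^sub>C x = x"
    and scaleR_scaleC: "scaleR r x = complex_of_real r *\<^sub>C x"

class complex_inner = complex_vector + real_normed_vector +
  fixes cinner :: "'a \<Rightarrow> 'a \<Rightarrow> complex"
  assumes cinner_commute: "cinner x y = cnj (cinner y x)"
    and cinner_add_left: "cinner (x + y) z = cinner x z + cinner y z"
    and cinner_scaleC_left: "cinner (r *\<^sub>C x) y = cnj r * cinner x y"
    and cinner_ge_zero: "0 \<le> Re (cinner x x)"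
    and cinner_eq_zero_iff: "cinner x x = 0 \<longleftrightarrow> x = 0"
    and norm_eq_sqrt_cinner: "norm x = sqrt (Re (cinner x x))"

class chilbert_space = complex_inner + complete_space

definition csubspace :: "'a::complex_vector set \<Rightarrow> bool" where
  "csubspace S \<longleftrightarrow> 0 \<in> S \<and> (\<forall>x\<in>S. \<forall>y\<in>S. x + y \<in> S) \<and> (\<forall>c. \<forall>x\<in>S. c *\<^sub>C x \<in> S)"

definition closed_csubspace :: "'a::complex_inner set \<Rightarrow> bool" where
  "closed_csubspace S \<longleftrightarrow> csubspace S \<and> closed S"

definition orthc :: "'a::complex_inner set \<Rightarrow> 'a set" where
  "orthc A = {x. \<forall>y\<in>A. cinner y x = 0}"

definition cjoin :: "'a::complex_inner set \<Rightarrow> 'a set \<Rightarrow> 'a set" where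
  "cjoin A B = \<Inter>{C. closed_csubspace C \<and> A \<union> B \<subseteq> C}"

text \<open>Sasaki product \<open>A & B = (A \<or> B\<^sup>\<perp>) \<and> B\<close>.\<close>
definition sand :: "'a::complex_inner set \<Rightarrow> 'a set \<Rightarrow> 'a set" where
  "sand A B = cjoin A (orthc B) \<inter> B"

fun sand_prod :: "(nat \<Rightarrow> 'a::complex_inner set) \<Rightarrow> nat \<Rightarrow> 'a set" where
  "sand_prod A 0 = UNIV"
| "sand_prod A (Suc n) = (if n = 0 then A 1 else sand (sand_prod A n) (A (Suc n)))"

definition cproj :: "'a::complex_inner set \<Rightarrow> 'a \<Rightarrow> 'a" where
  "cproj A x = (THE y. y \<in> A \<and> x - y \<in> orthc A)"

fun cproj_prod :: "(nat \<Rightarrow> 'a::complex_inner set) \<Rightarrow> nat \<Rightarrow> 'a \<Rightarrow> 'a" where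
  "cproj_prod A 0 = id"
| "cproj_prod A (Suc n) = cproj (A (Suc n)) \<circ> cproj_prod A n"

end

(*
  For a closed subspace A, the projection [A] is bounded and linear, so [A]^-1(B) is a
  closed subspace; it contains A\<^sup>\<perp> (which [A] kills) and [A] fixes A pointwise.
  Hence S & A = (S \<or> A\<^sup>\<perp>) \<and> A \<subseteq> B iff S \<subseteq> [A]^-1(B); for the forward direction note
  that [A]s = s - (s - [A]s) lies both in S \<or> A\<^sup>\<perp> and in A.  Peeling off the last factor,
  A 1 & ... & A (n+1) \<subseteq> B iff A 1 & ... & A n \<subseteq> [A (n+1)]^-1(B), and induction on n
  turns the right-hand side into [A n]...[A 1]H \<subseteq> [A (n+1)]^-1(B).

  The projection exists by the nearest-point argument: by the parallelogram law a
  minimising sequence in a closed convex set is Cauchy, and at a nearest point y of a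
  subspace C the first-order condition forces x - y \<perp> C.
*)

theory Submission
  imports Defs
begin

lemma scaleC_minus_one: "(- 1) *\<^sub>C x = - (x::'a::complex_vector)"
  using scaleR_scaleC[of "-1" x] by simp

lemma cinner_add_right: "cinner x (y + z) = cinner x y + cinner (x::'a::complex_inner) z"
  by (subst (1 2 3) cinner_commute) (simp add: cinner_add_left)

lemma cinner_scaleC_right: "cinner x (r *\<^sub>C y) = r * cinner (x::'a::complex_inner) y"
  by (subst (1 2) cinner_commute) (simp add: cinner_scaleC_left)

lemma cinner_minus_right: "cinner x (- y) = - cinner (x::'a::complex_inner) y"
  using cinner_scaleC_right[of x "-1" y] by (simp add: scaleC_minus_one)

lemma cinner_zero_right [simp]: "cinner (x::'a::complex_inner) 0 = 0"
  using cinner_add_right[of x 0 0] by simp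

lemma cinner_scaleR_right: "cinner x (r *\<^sub>R y) = r * cinner (x::'a::complex_inner) y"
  by (simp add: scaleR_scaleC cinner_scaleC_right)

lemma Re_cinner_commute: "Re (cinner x y) = Re (cinner y (x::'a::complex_inner))"
  by (subst cinner_commute) simp

lemma power2_norm_eq_cinner: "(norm x)\<^sup>2 = Re (cinner x (x::'a::complex_inner))"
  by (simp add: norm_eq_sqrt_cinner cinner_ge_zero)

lemma norm_add_square:
  "(norm (x + y))\<^sup>2 = (norm x)\<^sup>2 + (norm y)\<^sup>2 + 2 * Re (cinner x (y::'a::complex_inner))"
  by (simp add: power2_norm_eq_cinner cinner_add_left cinner_add_right Re_cinner_commute[of y x])

lemma norm_diff_square:
  "(norm (x - y))\<^sup>2 = (norm x)\<^sup>2 + (norm y)\<^sup>2 - 2 * Re (cinner x (y::'a::complex_inner))"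
  using norm_add_square[of x "- y"] by (simp add: cinner_minus_right)

lemma parallelogram_law:
  "(norm (x + y))\<^sup>2 + (norm (x - y))\<^sup>2 = 2 * (norm x)\<^sup>2 + 2 * (norm (y::'a::complex_inner))\<^sup>2"
  by (simp add: norm_add_square norm_diff_square)

lemma csubspace_0: "csubspace S \<Longrightarrow> 0 \<in> S"
  by (simp add: csubspace_def)

lemma csubspace_add: "csubspace S \<Longrightarrow> x \<in> S \<Longrightarrow> y \<in> S \<Longrightarrow> x + y \<in> S"
  by (simp add: csubspace_def)

lemma csubspace_scaleC: "csubspace S \<Longrightarrow> x \<in> S \<Longrightarrow> c *\<^sub>C x \<in> S"
  by (simp add: csubspace_def)

lemma csubspace_scaleR: "csubspace S \<Longrightarrow> x \<in> S \<Longrightarrow> r *\<^sub>R x \<in> S"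
  by (simp add: csubspace_def scaleR_scaleC)

lemma csubspace_diff: "csubspace S \<Longrightarrow> x \<in> S \<Longrightarrow> y \<in> S \<Longrightarrow> x - y \<in> S"
  by (metis csubspace_add csubspace_scaleC scaleC_minus_one diff_conv_add_uminus)

lemma csubspace_imp_convex: "csubspace S \<Longrightarrow> convex S"
  by (simp add: convex_def csubspace_add csubspace_scaleR)

lemma orthcD: "z \<in> orthc S \<Longrightarrow> y \<in> S \<Longrightarrow> cinner y z = 0"
  by (simp add: orthc_def)

lemma csubspace_orthc: "csubspace (orthc (S::'a::complex_inner set))"
  by (simp add: csubspace_def orthc_def cinner_add_right cinner_scaleC_right)

lemma linear_term_zero_if_quadratic_nonneg:
  fixes a b :: real
  assumes "\<And>t. 2 * t * b \<le> t\<^sup>2 * a"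
  shows "b = 0"
proof -
  define k where "k = \<bar>a\<bar> + 1"
  have k: "k > 0" "a \<le> k - 1"
    by (auto simp: k_def)
  have "2 * b\<^sup>2 * k \<le> b\<^sup>2 * a"
    using assms[of "b / k"] k(1) by (simp add: field_simps power2_eq_square)
  also have "\<dots> \<le> b\<^sup>2 * (k - 1)"
    using k(2) by (simp add: mult_left_mono)
  finally have "b\<^sup>2 * (k + 1) \<le> 0"
    by (simp add: algebra_simps)
  then show ?thesis
    using k(1) by (simp add: mult_le_0_iff)
qed

lemma minimizing_sequence_Cauchy:
  fixes x :: "'a::complex_inner"
  assumes "convex C" and c: "\<And>n. c n \<in> C"
    and lim: "(\<lambda>n. norm (x - c n)) \<longlonglongrightarrow> infdist x C"
  shows "Cauchy c"
proof (rule CauchyI)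
  define d where "d = infdist x C"
  have bound: "(norm (c m - c n))\<^sup>2 \<le> 2 * (norm (x - c m))\<^sup>2 + 2 * (norm (x - c n))\<^sup>2 - 4 * d\<^sup>2"
    for m n
  proof -
    define mid where "mid = (1/2) *\<^sub>R c m + (1/2) *\<^sub>R c n"
    have "mid \<in> C"
      unfolding mid_def using \<open>convex C\<close> c by (rule_tac convexD) auto
    then have "2 * d \<le> 2 * norm (x - mid)"
      unfolding d_def dist_norm[symmetric] by (simp add: infdist_le)
    also have "\<dots> = norm (2 *\<^sub>R (x - mid))"
      by simp
    also have "2 *\<^sub>R (x - mid) = (x - c m) + (x - c n)"
      unfolding mid_def by (simp add: scaleR_right_diff_distrib scaleR_add_right scaleR_2)
    finally have "(2 * d)\<^sup>2 \<le> (norm ((x - c m) + (x - c n)))\<^sup>2"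
      using infdist_nonneg[of x C] unfolding d_def by (intro power_mono) auto
    then have "4 * d\<^sup>2 \<le> (norm ((x - c m) + (x - c n)))\<^sup>2"
      by (simp add: power_mult_distrib)
    then show ?thesis
      using parallelogram_law[of "x - c m" "x - c n"] by (simp add: norm_minus_commute)
  qed
  fix e :: real
  assume "e > 0"
  have "(\<lambda>n. (norm (x - c n))\<^sup>2) \<longlonglongrightarrow> d\<^sup>2"
    unfolding d_def by (intro tendsto_intros lim)
  then have "\<forall>\<^sub>F n in sequentially. (norm (x - c n))\<^sup>2 < d\<^sup>2 + e\<^sup>2 / 4"
    using \<open>e > 0\<close> by (intro order_tendstoD) auto
  then obtain M where M: "\<And>n. n \<ge> M \<Longrightarrow> (norm (x - c n))\<^sup>2 < d\<^sup>2 + e\<^sup>2 / 4"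
    unfolding eventually_sequentially by blast
  have "norm (c m - c n) < e" if "m \<ge> M" "n \<ge> M" for m n
  proof -
    have "(norm (c m - c n))\<^sup>2 < e\<^sup>2"
      using bound[of m n] M[OF that(1)] M[OF that(2)] by linarith
    then show ?thesis
      using \<open>e > 0\<close> by (simp add: power_less_imp_less_base)
  qed
  then show "\<exists>M. \<forall>m\<ge>M. \<forall>n\<ge>M. norm (c m - c n) < e"
    by blast
qed

lemma nearest_point_exists:
  fixes x :: "'a::chilbert_space"
  assumes "closed C" "convex C" "C \<noteq> {}"
  obtains y where "y \<in> C" "\<And>c. c \<in> C \<Longrightarrow> norm (x - y) \<le> norm (x - c)"
proof -
  have "\<exists>c\<in>C. dist x c < infdist x C + 1 / Suc n" for n
    using cInf_lessD[of "dist x ` C" "infdist x C + 1 / Suc n"] \<open>C \<noteq> {}\<close>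
    by (simp add: infdist_notempty)
  then obtain c where c: "\<And>n. c n \<in> C" "\<And>n. dist x (c n) < infdist x C + 1 / Suc n"
    by metis
  have lim: "(\<lambda>n. norm (x - c n)) \<longlonglongrightarrow> infdist x C"
  proof (rule tendsto_sandwich)
    show "\<forall>\<^sub>F n in sequentially. infdist x C \<le> norm (x - c n)"
      using c(1) by (simp add: infdist_le dist_norm[symmetric])
    show "\<forall>\<^sub>F n in sequentially. norm (x - c n) \<le> infdist x C + 1 / Suc n"
      using c(2) by (simp add: dist_norm less_imp_le)
    show "(\<lambda>n. infdist x C + 1 / Suc n) \<longlonglongrightarrow> infdist x C"
      using LIMSEQ_inverse_real_of_nat_add by (simp add: inverse_eq_divide)
  qed simp
  obtain y where y: "c \<longlonglongrightarrow> y"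
    using minimizing_sequence_Cauchy[OF \<open>convex C\<close> c(1) lim] Cauchy_convergent convergent_def
    by blast
  show thesis
  proof
    show "y \<in> C"
      using closed_sequentially[OF \<open>closed C\<close> c(1) y] .
    have "(\<lambda>n. norm (x - c n)) \<longlonglongrightarrow> norm (x - y)"
      by (intro tendsto_intros y)
    then have "norm (x - y) = infdist x C"
      using lim by (rule LIMSEQ_unique)
    then show "norm (x - y) \<le> norm (x - c')" if "c' \<in> C" for c'
      using that by (simp add: infdist_le dist_norm[symmetric])
  qed
qed

lemma nearest_point_orthc:
  fixes x y :: "'a::complex_inner"
  assumes C: "csubspace C" and "y \<in> C" and nearest: "\<And>c. c \<in> C \<Longrightarrow> norm (x - y) \<le> norm (x - c)"
  shows "x - y \<in> orthc C"
proof -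
  have Re_zero: "Re (cinner v (x - y)) = 0" if "v \<in> C" for v
  proof (rule linear_term_zero_if_quadratic_nonneg)
    fix t :: real
    have "y + t *\<^sub>R v \<in> C"
      using C \<open>y \<in> C\<close> \<open>v \<in> C\<close> by (simp add: csubspace_add csubspace_scaleR)
    then have "(norm (x - y))\<^sup>2 \<le> (norm ((x - y) - t *\<^sub>R v))\<^sup>2"
      using nearest norm_ge_zero power_mono by (metis diff_diff_eq)
    also have "\<dots> = (norm (x - y))\<^sup>2 + t\<^sup>2 * (norm v)\<^sup>2 - 2 * t * Re (cinner v (x - y))"
      by (simp add: norm_diff_square cinner_scaleR_right Re_cinner_commute[of "x - y"]
          power_mult_distrib)
    finally show "2 * t * Re (cinner v (x - y)) \<le> t\<^sup>2 * (norm v)\<^sup>2"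
      by simp
  qed
  have "cinner v (x - y) = 0" if "v \<in> C" for v
  proof -
    have "Im (cinner v (x - y)) = Re (cinner (\<i> *\<^sub>C v) (x - y))"
      by (simp add: cinner_scaleC_left)
    also have "\<dots> = 0"
      using C that by (simp add: Re_zero csubspace_scaleC)
    finally show ?thesis
      using Re_zero[OF that] by (simp add: complex_eq_iff)
  qed
  then show ?thesis
    by (simp add: orthc_def)
qed

lemma orthogonal_decomposition_exists:
  fixes x :: "'a::chilbert_space"
  assumes "closed_csubspace C"
  shows "\<exists>y\<in>C. x - y \<in> orthc C"
proof -
  have C: "csubspace C" "closed C"
    using assms by (auto simp: closed_csubspace_def)
  then obtain y where "y \<in> C" "\<And>c. c \<in> C \<Longrightarrow> norm (x - y) \<le> norm (x - c)"
    using nearest_point_exists[of C x] csubspace_imp_convex csubspace_0 by blast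
  then show ?thesis
    using nearest_point_orthc[OF C(1)] by blast
qed

lemma orthogonal_decomposition_unique:
  fixes x :: "'a::complex_inner"
  assumes "csubspace C" "y \<in> C" "y' \<in> C" "x - y \<in> orthc C" "x - y' \<in> orthc C"
  shows "y = y'"
proof -
  have "y - y' = (x - y') - (x - y)"
    by simp
  then have "y - y' \<in> orthc C"
    using assms(4,5) csubspace_orthc by (metis csubspace_diff)
  moreover have "y - y' \<in> C"
    using assms(1-3) by (rule csubspace_diff)
  ultimately have "cinner (y - y') (y - y') = 0"
    by (rule orthcD)
  then show ?thesis
    by (simp add: cinner_eq_zero_iff)
qed

lemma
  fixes C :: "'a::chilbert_space set"
  assumes "closed_csubspace C"
  shows cproj_in: "cproj C x \<in> C"
    and cproj_residual_orthc: "x - cproj C x \<in> orthc C"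
proof -
  have "csubspace C"
    using assms by (simp add: closed_csubspace_def)
  then have "\<exists>!y. y \<in> C \<and> x - y \<in> orthc C"
    using orthogonal_decomposition_exists[OF assms, of x] orthogonal_decomposition_unique
    by blast
  then have "cproj C x \<in> C \<and> x - cproj C x \<in> orthc C"
    unfolding cproj_def by (rule theI')
  then show "cproj C x \<in> C" and "x - cproj C x \<in> orthc C"
    by auto
qed

lemma cproj_unique:
  fixes C :: "'a::chilbert_space set"
  assumes "closed_csubspace C" "y \<in> C" "x - y \<in> orthc C"
  shows "cproj C x = y"
  using orthogonal_decomposition_unique[of C "cproj C x" y x] cproj_in[OF assms(1), of x] cproj_residual_orthc[OF assms(1), of x] assms
  by (simp add: closed_csubspace_def)

lemma cproj_eq_self:
  fixes C :: "'a::chilbert_space set"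
  assumes "closed_csubspace C" "x \<in> C"
  shows "cproj C x = x"
  using assms(1) by (rule cproj_unique) (simp_all add: assms csubspace_0 csubspace_orthc)

lemma cproj_orthc_eq_0:
  fixes C :: "'a::chilbert_space set"
  assumes "closed_csubspace C" "x \<in> orthc C"
  shows "cproj C x = 0"
proof (rule cproj_unique[OF assms(1)])
  show "0 \<in> C"
    using assms(1) by (simp add: closed_csubspace_def csubspace_0)
qed (simp add: assms(2))

lemma cproj_add:
  fixes C :: "'a::chilbert_space set"
  assumes "closed_csubspace C"
  shows "cproj C (x + y) = cproj C x + cproj C y"
proof (rule cproj_unique[OF assms])
  have C: "csubspace C"
    using assms by (simp add: closed_csubspace_def)
  show "cproj C x + cproj C y \<in> C"
    using C cproj_in[OF assms] by (simp add: csubspace_add)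
  have "x + y - (cproj C x + cproj C y) = (x - cproj C x) + (y - cproj C y)"
    by simp
  then show "x + y - (cproj C x + cproj C y) \<in> orthc C"
    using cproj_residual_orthc[OF assms] csubspace_orthc by (metis csubspace_add)
qed

lemma cproj_scaleC:
  fixes C :: "'a::chilbert_space set"
  assumes "closed_csubspace C"
  shows "cproj C (a *\<^sub>C x) = a *\<^sub>C cproj C x"
proof (rule cproj_unique[OF assms])
  have C: "csubspace C"
    using assms by (simp add: closed_csubspace_def)
  show "a *\<^sub>C cproj C x \<in> C"
    using C cproj_in[OF assms] by (simp add: csubspace_scaleC)
  have "a *\<^sub>C x - a *\<^sub>C cproj C x = a *\<^sub>C (x - cproj C x)"
    by (metis add_diff_cancel_right' diff_add_cancel scaleC_add_right)
  then show "a *\<^sub>C x - a *\<^sub>C cproj C x \<in> orthc C"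
    using cproj_residual_orthc[OF assms] csubspace_orthc by (metis csubspace_scaleC)
qed

lemma norm_cproj_le:
  fixes C :: "'a::chilbert_space set"
  assumes "closed_csubspace C"
  shows "norm (cproj C x) \<le> norm x"
proof -
  have "cinner (cproj C x) (x - cproj C x) = 0"
    using cproj_residual_orthc[OF assms] cproj_in[OF assms] by (rule orthcD)
  then have "(norm x)\<^sup>2 = (norm (cproj C x))\<^sup>2 + (norm (x - cproj C x))\<^sup>2"
    using norm_add_square[of "cproj C x" "x - cproj C x"] by simp
  then have "(norm (cproj C x))\<^sup>2 \<le> (norm x)\<^sup>2"
    by simp
  then show ?thesis
    by (rule power2_le_imp_le) simp
qed

lemma bounded_linear_cproj:
  fixes C :: "'a::chilbert_space set"
  assumes "closed_csubspace C"
  shows "bounded_linear (cproj C)"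
proof (rule bounded_linear_intro[where K = 1])
  show "cproj C (x + y) = cproj C x + cproj C y" for x y
    using assms by (rule cproj_add)
  show "cproj C (r *\<^sub>R x) = r *\<^sub>R cproj C x" for r x
    using assms by (simp add: scaleR_scaleC cproj_scaleC)
  show "norm (cproj C x) \<le> norm x * 1" for x
    using assms by (simp add: norm_cproj_le)
qed

lemma closed_csubspace_vimage_cproj:
  fixes A B :: "'a::chilbert_space set"
  assumes A: "closed_csubspace A" and B: "closed_csubspace B"
  shows "closed_csubspace (cproj A -` B)"
proof -
  have "csubspace B" "closed B"
    using B by (auto simp: closed_csubspace_def)
  moreover have "cproj A 0 = 0"
    using A csubspace_0[OF csubspace_orthc] by (rule cproj_orthc_eq_0)
  ultimately show ?thesis
    unfolding closed_csubspace_def csubspace_def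
    using linear_continuous_on[OF bounded_linear_cproj[OF A]]
    by (auto simp: cproj_add[OF A] cproj_scaleC[OF A] closed_vimage)
qed

lemma cjoin_least: "closed_csubspace C \<Longrightarrow> S \<subseteq> C \<Longrightarrow> T \<subseteq> C \<Longrightarrow> cjoin S T \<subseteq> C"
  unfolding cjoin_def by auto

lemma cjoin_upper: "S \<subseteq> cjoin S T" "T \<subseteq> cjoin S T"
  unfolding cjoin_def by auto

lemma csubspace_cjoin: "csubspace (cjoin S T)"
  unfolding cjoin_def csubspace_def closed_csubspace_def by auto

lemma sand_UNIV_left: "sand UNIV A = A"
  unfolding sand_def cjoin_def by auto

lemma sand_prod_Suc: "sand_prod A (Suc n) = sand (sand_prod A n) (A (Suc n))"
  by (cases n) (simp_all add: sand_UNIV_left)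

lemma sand_subset_iff:
  fixes A B :: "'a::chilbert_space set"
  assumes A: "closed_csubspace A" and B: "closed_csubspace B"
  shows "sand S A \<subseteq> B \<longleftrightarrow> S \<subseteq> cproj A -` B"
proof
  assume "sand S A \<subseteq> B"
  show "S \<subseteq> cproj A -` B"
  proof
    fix s
    assume "s \<in> S"
    have "s - (s - cproj A s) \<in> cjoin S (orthc A)"
      using \<open>s \<in> S\<close> cproj_residual_orthc[OF A] cjoin_upper csubspace_cjoin by (metis csubspace_diff subsetD)
    then have "cproj A s \<in> sand S A"
      using cproj_in[OF A] by (simp add: sand_def)
    then show "s \<in> cproj A -` B"
      using \<open>sand S A \<subseteq> B\<close> by blast
  qed
next
  assume "S \<subseteq> cproj A -` B"
  moreover have "orthc A \<subseteq> cproj A -` B"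
    using B by (auto simp: cproj_orthc_eq_0[OF A] closed_csubspace_def csubspace_0)
  ultimately have "cjoin S (orthc A) \<subseteq> cproj A -` B"
    using A B by (intro cjoin_least closed_csubspace_vimage_cproj)
  then show "sand S A \<subseteq> B"
    using A by (auto simp: sand_def cproj_eq_self)
qed

theorem lemmaA2:
  fixes A :: "nat \<Rightarrow> 'a::chilbert_space set" and B :: "'a set" and n :: nat
  assumes "\<forall>i\<in>{1..n}. closed_csubspace (A i)"
    and "closed_csubspace B"
  shows "sand_prod A n \<subseteq> B \<longleftrightarrow> range (cproj_prod A n) \<subseteq> B"
  using assms
proof (induction n arbitrary: B)
  case 0
  then show ?case
    by simp
next
  case (Suc n)
  let ?P = "cproj (A (Suc n))"
  have A: "closed_csubspace (A (Suc n))" and A_prefix: "\<forall>i\<in>{1..n}. closed_csubspace (A i)"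
    using Suc.prems(1) by auto
  have "sand_prod A (Suc n) \<subseteq> B \<longleftrightarrow> sand_prod A n \<subseteq> ?P -` B"
    unfolding sand_prod_Suc using A Suc.prems(2) by (rule sand_subset_iff)
  also have "\<dots> \<longleftrightarrow> range (cproj_prod A n) \<subseteq> ?P -` B"
    using A_prefix closed_csubspace_vimage_cproj[OF A Suc.prems(2)] by (rule Suc.IH)
  also have "\<dots> \<longleftrightarrow> range (cproj_prod A (Suc n)) \<subseteq> B"
    by (auto simp: image_subset_iff)
  finally show ?case .
qed

end
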